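(* Let $(r_k)_{k\ge 1}$ be a sequence of real numbers and let $C_1, C_2, a, \gamma, \varepsilon$ be constants with $0<C_1<1$, $C_2>0$, $0<a<1$, $\gamma\in\mathbb{R}$, and $0<\varepsilon<1-a$. Suppose that for all integers $k\ge 1$, \[ r_{k+1} \le (1 - C_1 k^{-a})\, r_k + C_2\left(k^{-2a+\varepsilon} + k^{-2\gamma+a+\varepsilon}\right). \] Then there exists a constant $\mathscr{E}$ (independent of $k$) such that for all $k\ge 1$, \[ r_{k+1} \le \left(k^{-2\gamma+2a+\varepsilon} + k^{-a+\varepsilon}\right)\mathscr{E}. \]
   Context: In the paper's application, $\gamma$ is the exponent of the step sizes $\gamma_k = O(k^{-\gamma})$ and $a$ is the exponent of the averaging rates $\alpha_k=O(k^{-a})$, with $\gamma>a>0$; the lemma itself places no further condition on $\gamma$. *)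

theory Defs
  imports Complex_Main
begin

end

theory Submission
  imports Defs "HOL-Real_Asymp.Real_Asymp"
begin

text \<open>
  With \<open>p = -2\<gamma> + 2a + \<epsilon>\<close> and \<open>q = -a + \<epsilon>\<close> the forcing term of the recursion is
  \<open>C\<^sub>2 k\<^sup>-\<^sup>a (k\<^sup>p + k\<^sup>q)\<close>. Since \<open>a < 1\<close>, the contraction \<open>C\<^sub>1 k\<^sup>-\<^sup>a\<close> dominates the relative
  growth \<open>|p|/k\<close> of \<open>k\<^sup>p\<close>, so for large \<open>k\<close> half of the contraction survives the passage
  from \<open>(k-1)\<^sup>p\<close> to \<open>k\<^sup>p\<close>. The other half absorbs the forcing term once
  \<open>E \<ge> 2C\<^sub>2/C\<^sub>1\<close>, and the bound \<open>r\<^sub>k\<^sub>+\<^sub>1 \<le> E (k\<^sup>p + k\<^sup>q)\<close> propagates by induction;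
  the finitely many initial indices are covered by enlarging \<open>E\<close>.
\<close>

lemma eventually_half_contraction_powr:
  fixes C a p :: real
  assumes "0 < C" "0 < a" "a < 1"
  shows "eventually (\<lambda>k. (1 - C * real k powr (-a)) * (real k - 1) powr p
                         \<le> (1 - C/2 * real k powr (-a)) * real k powr p) sequentially"
  using assms by real_asymp

lemma eventually_contraction_le_one:
  fixes C a :: real
  assumes "0 < a"
  shows "eventually (\<lambda>k. C * real k powr (-a) \<le> 1) sequentially"
  using assms by real_asymp

lemma linear_recursion_le_comparison:
  fixes u v x :: "nat \<Rightarrow> real" and c d E :: real
  assumes rec: "\<And>k. k \<ge> K \<Longrightarrow> u (Suc k) \<le> (1 - c * x k) * u k + d * x k * v (Suc k)"
    and comp: "\<And>k. k \<ge> K \<Longrightarrow> (1 - c * x k) * v k \<le> (1 - c/2 * x k) * v (Suc k)"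
    and x_nonneg: "\<And>k. k \<ge> K \<Longrightarrow> 0 \<le> x k"
    and x_le: "\<And>k. k \<ge> K \<Longrightarrow> c * x k \<le> 1"
    and v_nonneg: "\<And>k. 0 \<le> v k"
    and E: "0 \<le> E" "d \<le> c/2 * E"
    and start: "u K \<le> E * v K"
    and "K \<le> n"
  shows "u n \<le> E * v n"
  using \<open>K \<le> n\<close>
proof (induction n rule: dec_induct)
  case base
  show ?case using start .
next
  case (step k)
  have "u (Suc k) \<le> (1 - c * x k) * u k + d * x k * v (Suc k)"
    using rec[OF step.hyps(1)] .
  also have "\<dots> \<le> (1 - c * x k) * (E * v k) + d * x k * v (Suc k)"
    using step.IH x_le[OF step.hyps(1)] by (intro add_right_mono mult_left_mono) auto
  also have "\<dots> \<le> E * ((1 - c/2 * x k) * v (Suc k)) + d * x k * v (Suc k)"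
    using mult_left_mono[OF comp[OF step.hyps(1)] E(1)] by (simp add: mult_ac)
  also have "\<dots> = E * v (Suc k) - (c/2 * E - d) * (x k * v (Suc k))"
    by (simp add: algebra_simps)
  also have "\<dots> \<le> E * v (Suc k)"
    using E(2) x_nonneg[OF step.hyps(1)] v_nonneg[of "Suc k"] by simp
  finally show ?case .
qed

lemma finite_dominated_by_multiple:
  fixes f b :: "'a \<Rightarrow> real"
  assumes "finite A" and "\<And>k. k \<in> A \<Longrightarrow> 0 < b k"
  shows "\<exists>E \<ge> E\<^sub>0. \<forall>k\<in>A. f k \<le> E * b k"
proof (intro exI conjI ballI)
  let ?E = "Max (insert E\<^sub>0 ((\<lambda>k. f k / b k) ` A))"
  show "E\<^sub>0 \<le> ?E" using \<open>finite A\<close> by simp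
  fix k assume "k \<in> A"
  then have "f k / b k \<le> ?E"
    using \<open>finite A\<close> by simp
  then show "f k \<le> ?E * b k"
    using assms(2)[OF \<open>k \<in> A\<close>] by (simp add: pos_divide_le_eq)
qed

lemma recursion_bounded_by_powr_sum:
  fixes r :: "nat \<Rightarrow> real" and C D a p q :: real
  assumes "0 < C" "0 < a" "a < 1"
    and rec: "\<And>k. k \<ge> 1 \<Longrightarrow> r (Suc k) \<le> (1 - C * real k powr (-a)) * r k
                                 + D * real k powr (-a) * (real k powr p + real k powr q)"
  shows "\<exists>E. \<forall>k\<ge>1. r (Suc k) \<le> E * (real k powr p + real k powr q)"
proof -
  \<comment> \<open>shifted by one, so that the claim reads \<open>r k \<le> E * v k\<close>\<close>
  define v where "v k = (real k - 1) powr p + (real k - 1) powr q" for k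
  define x where "x k = real k powr (-a)" for k
  have v_Suc: "v (Suc k) = real k powr p + real k powr q" for k
    by (simp add: v_def)
  have "\<forall>\<^sub>F k in sequentially. 1 \<le> k \<and> C * x k \<le> 1
          \<and> (1 - C * x k) * v k \<le> (1 - C/2 * x k) * v (Suc k)"
    using eventually_ge_at_top[of 1] eventually_contraction_le_one[OF \<open>0 < a\<close>, of C]
      eventually_half_contraction_powr[OF assms(1-3), of p]
      eventually_half_contraction_powr[OF assms(1-3), of q]
    by eventually_elim (simp add: v_def v_Suc x_def distrib_left add_mono)
  then obtain K where K: "K \<ge> 1"
    and eventual: "\<And>k. k \<ge> K \<Longrightarrow> C * x k \<le> 1 \<and> (1 - C * x k) * v k \<le> (1 - C/2 * x k) * v (Suc k)"
    by (auto simp: eventually_sequentially)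
  obtain E where E: "E \<ge> max 0 (2 * D / C)"
    and initial: "\<forall>k\<in>{1..K}. r (Suc k) \<le> E * v (Suc k)"
    using finite_dominated_by_multiple[of "{1..K}" "\<lambda>k. v (Suc k)" "max 0 (2 * D / C)"
          "\<lambda>k. r (Suc k)"]
    by (force simp: v_Suc add_pos_pos)
  have tail: "r n \<le> E * v n" if "Suc K \<le> n" for n
  proof (rule linear_recursion_le_comparison[where x = x and c = C and d = D, OF _ _ _ _ _ _ _ _ that])
    fix k assume "Suc K \<le> k"
    then show "r (Suc k) \<le> (1 - C * x k) * r k + D * x k * v (Suc k)"
      using rec[of k] by (simp add: x_def v_Suc)
    show "(1 - C * x k) * v k \<le> (1 - C/2 * x k) * v (Suc k)" "C * x k \<le> 1"
      using eventual \<open>Suc K \<le> k\<close> by simp_all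
    show "0 \<le> x k" by (simp add: x_def)
  next
    show "0 \<le> v k" for k by (simp add: v_def)
    show "0 \<le> E" "D \<le> C/2 * E"
      using E \<open>0 < C\<close> by (auto simp: field_simps)
    show "r (Suc K) \<le> E * v (Suc K)"
      using initial K by simp
  qed
  have "r (Suc k) \<le> E * v (Suc k)" if "k \<ge> 1" for k
    using initial tail[of "Suc k"] that by (cases "k \<le> K") auto
  then show ?thesis
    by (auto simp: v_Suc)
qed

theorem lemma2:
  fixes r :: "nat \<Rightarrow> real" and C1 C2 a \<gamma> \<epsilon> :: real
  assumes "0 < C1" "C1 < 1" "0 < C2" "0 < a" "a < 1" "0 < \<epsilon>" "\<epsilon> < 1 - a"
    and rec: "\<And>k. k \<ge> 1 \<Longrightarrow>
      r (k + 1) \<le> (1 - C1 * real k powr (-a)) * r k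
                 + C2 * (real k powr (-2*a + \<epsilon>) + real k powr (-2*\<gamma> + a + \<epsilon>))"
  shows "\<exists>E::real. \<forall>k\<ge>1.
      r (k + 1) \<le> (real k powr (-2*\<gamma> + 2*a + \<epsilon>) + real k powr (-a + \<epsilon>)) * E"
proof -
  define p where "p = -2*\<gamma> + 2*a + \<epsilon>"
  define q where "q = -a + \<epsilon>"
  have forcing: "real k powr (-2*a + \<epsilon>) + real k powr (-2*\<gamma> + a + \<epsilon>)
                 = real k powr (-a) * (real k powr p + real k powr q)" for k
    by (simp add: p_def q_def distrib_left powr_add[symmetric] add_ac)
  have "\<exists>E. \<forall>k\<ge>1. r (Suc k) \<le> E * (real k powr p + real k powr q)"
    using rec \<open>0 < C1\<close> \<open>0 < a\<close> \<open>a < 1\<close> unfolding forcing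
    by (intro recursion_bounded_by_powr_sum[where D = C2]) (simp_all add: mult.assoc)
  then show ?thesis
    by (simp add: p_def q_def mult.commute)
qed

end
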